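(* Let $g^{bf}$ be the maximum-entropy element of $P$ and let $V=\min_{z\in P}z\cdot\log z$. For every $\theta^{ref}\in\mathbb{R}^m$, $$d(\eta,g^{bf})\;\le\;-V+\eta\cdot\log\eta\;\le\;d\big(\eta,g^{(\theta^{ref})}\big)+2\,\epsilon\cdot|\theta^{ref}|\;\le\;d\big(\eta,g^{(\theta^{ref})}\big)+2\|\epsilon\|_\infty\|\theta^{ref}\|_1,$$ where $|\theta^{ref}|$ is the entrywise absolute value.
   Context: Standard setup. Let $n\ge1$, $k\ge2$, $p\ge1$ be integers and $m=p+k$. There are $n$ data points $x_1,\dots,x_n$ and $p$ rules $h^{(1)},\dots,h^{(p)}$, each a map from $\{x_1,\dots,x_n\}$ to $\{1,\dots,k\}\cup\{?\}$, where "?" means abstain. Let $n_j\ge1$ be the number of indices $i$ with $h^{(j)}(x_i)\neq ?$. $\Delta_k$ denotes the probability simplex in $\mathbb{R}^k$; an element $z\in\Delta_k^n\subset\mathbb{R}^{nk}$ is written $z=(z_1,\dots,z_n)$ with $z_i=(z_{i1},\dots,z_{ik})\in\Delta_k$. For $j\le p$ let $h^{(j)}\in\{0,1\}^{nk}$ also denote the vector with $h^{(j)}_{i\ell}=1$ iff $h^{(j)}(x_i)=\ell$; for $\ell\le k$ let $\vec e^{\,n}_\ell\in\{0,1\}^{nk}$ have entries $(\vec e^{\,n}_\ell)_{i\ell'}=\mathbf 1(\ell'=\ell)$. The matrix $A\in\mathbb{R}^{m\times nk}$ has rows $a^{(j)}=h^{(j)}/n_j$ for $1\le j\le p$ and $a^{(p+\ell)}=\vec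 e^{\,n}_\ell/n$ for $1\le\ell\le k$. For $\theta\in\mathbb{R}^m$ put $a^{(\theta)}=A^\top\theta\in\mathbb{R}^{nk}$ (entries $a^{(\theta)}_{i\ell}$) and define $g^{(\theta)}\in\Delta_k^n$ by $g^{(\theta)}_{i\ell}=\exp(a^{(\theta)}_{i\ell})/\sum_{\ell'=1}^k\exp(a^{(\theta)}_{i\ell'})$; let $\mathcal G=\{g^{(\theta)}:\theta\in\mathbb{R}^m\}$. A fixed "true labeling" $\eta\in\Delta_k^n$ is given and $b^*:=A\eta\in\mathbb{R}^m$. Given $b\in\mathbb{R}^m$ and $\epsilon\in\mathbb{R}^m$ with $\epsilon\ge0$ and $b-\epsilon\le b^*\le b+\epsilon$ (entrywise), let $P=\{z\in\Delta_k^n:\ b-\epsilon\le Az\le b+\epsilon\}$ (entrywise). Logarithms act entrywise; $z\cdot\log g=\sum_{i,\ell}z_{i\ell}\log g_{i\ell}$ with conventions $0\log 0=0$, $\log 0=-\infty$. The maximum-entropy element of $P$ is the unique minimizer of $z\cdot\log z$ over $P$. For $\mu,\nu\in\Delta_k^n$, $d(\mu,\nu)=\sum_{i=1}^n\mathrm{KL}(\mu_i\|\nu_i)=\sum_{i,\ell}\mu_{i\ell}\log(\mu_{i\ell}/\nu_{i\ell})$, with $0\log(0/x)=0$. *)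

theory Defs
  imports "HOL-Analysis.Analysis" "HOL-Library.Extended_Real"
begin

(* Indexing conventions (0-based): data points i < n, classes l < k,
   rules j < p, rows of A r < m = p + k.  A rule h is a function
   nat \<Rightarrow> nat \<Rightarrow> nat option : h j i = None means abstain,
   h j i = Some l means rule j assigns class l to x_i.
   Elements of R^{nk} are functions z :: nat \<Rightarrow> nat \<Rightarrow> real (z i l),
   elements of R^m are functions nat \<Rightarrow> real. *)

definition simplex_n :: "nat \<Rightarrow> nat \<Rightarrow> (nat \<Rightarrow> nat \<Rightarrow> real) set" where
  "simplex_n n k = {z. \<forall>i<n. (\<forall>l<k. 0 \<le> z i l) \<and> (\<Sum>l<k. z i l) = 1}"

definition n_rule :: "nat \<Rightarrow> (nat \<Rightarrow> nat \<Rightarrow> nat option) \<Rightarrow> nat \<Rightarrow> nat" where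
  "n_rule n h j = card {i. i < n \<and> h j i \<noteq> None}"

definition hvec :: "(nat \<Rightarrow> nat \<Rightarrow> nat option) \<Rightarrow> nat \<Rightarrow> nat \<Rightarrow> nat \<Rightarrow> real" where
  "hvec h j i l = (if h j i = Some l then 1 else 0)"

definition Amat :: "nat \<Rightarrow> nat \<Rightarrow> nat \<Rightarrow> (nat \<Rightarrow> nat \<Rightarrow> nat option) \<Rightarrow> nat \<Rightarrow> nat \<Rightarrow> nat \<Rightarrow> real" where
  "Amat n k p h r i l =
     (if r < p then hvec h r i l / real (n_rule n h r)
      else if l = r - p then 1 / real n else 0)"

definition Aapply :: "nat \<Rightarrow> nat \<Rightarrow> nat \<Rightarrow> (nat \<Rightarrow> nat \<Rightarrow> nat option) \<Rightarrow> (nat \<Rightarrow> nat \<Rightarrow> real) \<Rightarrow> nat \<Rightarrow> real" where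
  "Aapply n k p h z r = (\<Sum>i<n. \<Sum>l<k. Amat n k p h r i l * z i l)"

definition atheta :: "nat \<Rightarrow> nat \<Rightarrow> nat \<Rightarrow> (nat \<Rightarrow> nat \<Rightarrow> nat option) \<Rightarrow> (nat \<Rightarrow> real) \<Rightarrow> nat \<Rightarrow> nat \<Rightarrow> real" where
  "atheta n k p h \<theta> i l = (\<Sum>r<p+k. Amat n k p h r i l * \<theta> r)"

definition gtheta :: "nat \<Rightarrow> nat \<Rightarrow> nat \<Rightarrow> (nat \<Rightarrow> nat \<Rightarrow> nat option) \<Rightarrow> (nat \<Rightarrow> real) \<Rightarrow> nat \<Rightarrow> nat \<Rightarrow> real" where
  "gtheta n k p h \<theta> i l =
     exp (atheta n k p h \<theta> i l) / (\<Sum>l'<k. exp (atheta n k p h \<theta> i l'))"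

definition Ppoly :: "nat \<Rightarrow> nat \<Rightarrow> nat \<Rightarrow> (nat \<Rightarrow> nat \<Rightarrow> nat option) \<Rightarrow> (nat \<Rightarrow> real) \<Rightarrow> (nat \<Rightarrow> real) \<Rightarrow> (nat \<Rightarrow> nat \<Rightarrow> real) set" where
  "Ppoly n k p h b \<epsilon> = {z \<in> simplex_n n k.
      \<forall>r<p+k. b r - \<epsilon> r \<le> Aapply n k p h z r \<and> Aapply n k p h z r \<le> b r + \<epsilon> r}"

(* z \<cdot> log z, with 0 log 0 = 0 (holds since 0 * ln 0 = 0) *)
definition negent :: "nat \<Rightarrow> nat \<Rightarrow> (nat \<Rightarrow> nat \<Rightarrow> real) \<Rightarrow> real" where
  "negent n k z = (\<Sum>i<n. \<Sum>l<k. z i l * ln (z i l))"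

definition is_maxent :: "nat \<Rightarrow> nat \<Rightarrow> (nat \<Rightarrow> nat \<Rightarrow> real) set \<Rightarrow> (nat \<Rightarrow> nat \<Rightarrow> real) \<Rightarrow> bool" where
  "is_maxent n k S g \<longleftrightarrow> g \<in> S \<and> (\<forall>z\<in>S. negent n k g \<le> negent n k z)"

definition kl_term :: "real \<Rightarrow> real \<Rightarrow> ereal" where
  "kl_term a c = (if a = 0 then 0 else if c = 0 then \<infinity> else ereal (a * ln (a / c)))"

definition dKL :: "nat \<Rightarrow> nat \<Rightarrow> (nat \<Rightarrow> nat \<Rightarrow> real) \<Rightarrow> (nat \<Rightarrow> nat \<Rightarrow> real) \<Rightarrow> ereal" where
  "dKL n k \<mu> \<nu> = (\<Sum>i<n. \<Sum>l<k. kl_term (\<mu> i l) (\<nu> i l))"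

end

theory Submission
  imports Defs
begin

text \<open>
  The maximum-entropy element \<open>g\<close> minimises the convex function \<open>z \<cdot> log z\<close> over the convex set
  \<open>P \<ni> \<eta>\<close>, so the slope of that function along the segment from \<open>g\<close> towards \<open>\<eta>\<close> is nonnegative.
  Near \<open>g\<close> this slope would tend to \<open>-\<infinity>\<close> if \<open>g\<close> vanished where \<open>\<eta>\<close> does not; hence \<open>g\<close> charges
  the support of \<open>\<eta>\<close>, and in the limit \<open>(\<eta> - g) \<cdot> log g \<ge> 0\<close>, i.e. \<open>d(\<eta>, g) \<le> \<eta> \<cdot> log \<eta> - g \<cdot> log g\<close>.
  For the second bound, Gibbs' inequality gives \<open>g \<cdot> log g\<^sub>\<theta> \<le> g \<cdot> log g\<close>, and since \<open>log g\<^sub>\<theta>\<close>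
  is \<open>A\<^sup>T \<theta>\<close> up to a row-wise constant, \<open>(\<eta> - g) \<cdot> log g\<^sub>\<theta> = \<theta> \<cdot> (A \<eta> - A g) \<le> 2 \<epsilon> \<cdot> |\<theta>|\<close>,
  both \<open>A \<eta>\<close> and \<open>A g\<close> lying in the box \<open>b \<plusminus> \<epsilon>\<close>.
\<close>

lemma mult_ln_ge_diff:
  fixes x z :: real
  assumes "0 \<le> x" "0 < z"
  shows "x - z \<le> x * ln x - x * ln z"
proof (cases "x = 0")
  case True
  then show ?thesis using assms by simp
next
  case False
  then have x: "x > 0" using assms by simp
  have "x * ln (z / x) \<le> x * (z / x - 1)"
    using ln_le_minus_one x assms by (simp add: mult_left_mono)
  moreover have "ln (z / x) = ln z - ln x" using x assms by (simp add: ln_div)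
  moreover have "x * (z / x - 1) = z - x" using x by (simp add: field_simps)
  ultimately show ?thesis by (simp add: algebra_simps)
qed

lemma convex_comb_pos:
  fixes x y t :: real
  assumes "0 \<le> x" "0 \<le> y" "0 < t" "t < 1" "x \<noteq> 0 \<or> y \<noteq> 0"
  shows "x + t * (y - x) > 0"
proof -
  have "(1 - t) * x \<ge> 0" "t * y \<ge> 0" "(1 - t) * x > 0 \<or> t * y > 0"
    using assms by auto
  moreover have "x + t * (y - x) = (1 - t) * x + t * y" by (simp add: algebra_simps)
  ultimately show ?thesis by linarith
qed

lemma convex_comb_between:
  fixes lo hi a c t :: real
  assumes "lo \<le> a" "lo \<le> c" "a \<le> hi" "c \<le> hi" "0 \<le> t" "t \<le> 1"
  shows "lo \<le> a + t * (c - a) \<and> a + t * (c - a) \<le> hi"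
proof -
  have "(1 - t) * lo \<le> (1 - t) * a" "t * lo \<le> t * c" "(1 - t) * a \<le> (1 - t) * hi" "t * c \<le> t * hi"
    using assms by (auto intro: mult_left_mono)
  moreover have "a + t * (c - a) = (1 - t) * a + t * c" by (simp add: algebra_simps)
  ultimately show ?thesis by (simp add: algebra_simps)
qed

lemma mult_ln_convex_comb_le:
  fixes x y t :: real
  assumes "0 \<le> x" "0 \<le> y" "0 < t" "t < 1"
  shows "(x + t * (y - x)) * ln (x + t * (y - x)) - x * ln x
           \<le> t * (y - x) * ln (x + t * (y - x)) + t * (y - x)"
proof (cases "x = 0 \<and> y = 0")
  case True
  then show ?thesis by simp
next
  case False
  then have "x + t * (y - x) > 0" using convex_comb_pos assms by blast
  from mult_ln_ge_diff[OF assms(1) this] show ?thesis by (simp add: algebra_simps)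
qed

lemma diff_mult_ln_convex_comb_mono:
  fixes x y t s :: real
  assumes "0 \<le> x" "0 \<le> y" "0 < t" "t \<le> s" "s < 1"
  shows "(y - x) * ln (x + t * (y - x)) \<le> (y - x) * ln (x + s * (y - x))"
proof (cases "x = 0 \<and> y = 0")
  case True
  then show ?thesis by simp
next
  case False
  then have pos: "x + t * (y - x) > 0" "x + s * (y - x) > 0"
    using convex_comb_pos assms by auto
  show ?thesis
  proof (cases "x \<le> y")
    case True
    then have "ln (x + t * (y - x)) \<le> ln (x + s * (y - x))"
      using pos assms by (simp add: mult_right_mono)
    then show ?thesis using True by (simp add: mult_left_mono)
  next
    case False
    then have "ln (x + s * (y - x)) \<le> ln (x + t * (y - x))"
      using pos assms by (simp add: mult_right_mono_neg)
    then show ?thesis using False by (simp add: mult_left_mono_neg)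
  qed
qed

definition convex_comb :: "(nat \<Rightarrow> nat \<Rightarrow> real) \<Rightarrow> (nat \<Rightarrow> nat \<Rightarrow> real) \<Rightarrow> real \<Rightarrow> nat \<Rightarrow> nat \<Rightarrow> real"
  where "convex_comb g e t i l = g i l + t * (e i l - g i l)"

text \<open>The derivative of \<open>t \<mapsto> negent n k (convex_comb g e t)\<close>, up to the constant
  \<open>\<Sum> (e - g) = 0\<close> on the simplex.\<close>

definition entropy_slope :: "nat \<Rightarrow> nat \<Rightarrow> (nat \<Rightarrow> nat \<Rightarrow> real) \<Rightarrow> (nat \<Rightarrow> nat \<Rightarrow> real) \<Rightarrow> real \<Rightarrow> real"
  where "entropy_slope n k g e t = (\<Sum>i<n. \<Sum>l<k. (e i l - g i l) * ln (convex_comb g e t i l))"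

lemma simplex_n_nonneg: "z \<in> simplex_n n k \<Longrightarrow> i < n \<Longrightarrow> l < k \<Longrightarrow> 0 \<le> z i l"
  by (simp add: simplex_n_def)

lemma sum_simplex_diff_eq_0:
  assumes "g \<in> simplex_n n k" "e \<in> simplex_n n k"
  shows "(\<Sum>i<n. \<Sum>l<k. c * (e i l - g i l)) = 0"
  using assms by (simp add: simplex_n_def sum_subtractf flip: sum_distrib_left)

lemma entropy_slope_nonneg:
  assumes g: "g \<in> simplex_n n k" and e: "e \<in> simplex_n n k"
    and min: "negent n k g \<le> negent n k (convex_comb g e t)"
    and t: "0 < t" "t < 1"
  shows "0 \<le> entropy_slope n k g e t"
proof -
  have "negent n k (convex_comb g e t) - negent n k g
      = (\<Sum>i<n. \<Sum>l<k. convex_comb g e t i l * ln (convex_comb g e t i l) - g i l * ln (g i l))"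
    by (simp add: negent_def sum_subtractf)
  also have "\<dots> \<le> (\<Sum>i<n. \<Sum>l<k. t * (e i l - g i l) * ln (convex_comb g e t i l) + t * (e i l - g i l))"
    using mult_ln_convex_comb_le[OF simplex_n_nonneg[OF g] simplex_n_nonneg[OF e] t]
    by (intro sum_mono) (simp add: convex_comb_def)
  also have "\<dots> = t * entropy_slope n k g e t"
    using sum_simplex_diff_eq_0[OF g e]
    by (simp add: entropy_slope_def sum.distrib sum_distrib_left mult.assoc)
  finally have "0 \<le> t * entropy_slope n k g e t" using min by simp
  then show ?thesis using t by (simp add: zero_le_mult_iff)
qed

lemma entropy_slope_diff_le_term:
  assumes g: "g \<in> simplex_n n k" and e: "e \<in> simplex_n n k"
    and t: "0 < t" "t \<le> s" "s < 1" and il: "i < n" "l < k"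
  shows "entropy_slope n k g e t - entropy_slope n k g e s
           \<le> (e i l - g i l) * ln (convex_comb g e t i l) - (e i l - g i l) * ln (convex_comb g e s i l)"
proof -
  define T where "T u = (\<lambda>(i, l). (e i l - g i l) * ln (convex_comb g e u i l))" for u
  have "entropy_slope n k g e u = (\<Sum>x\<in>{..<n} \<times> {..<k}. T u x)" for u
    by (simp add: entropy_slope_def T_def sum.cartesian_product)
  then have "entropy_slope n k g e t - entropy_slope n k g e s = (\<Sum>x\<in>{..<n} \<times> {..<k}. T t x - T s x)"
    by (simp add: sum_subtractf)
  also have "\<dots> = (T t (i, l) - T s (i, l)) + (\<Sum>x\<in>{..<n} \<times> {..<k} - {(i, l)}. T t x - T s x)"
    using il by (intro sum.remove) auto
  also have "\<dots> \<le> T t (i, l) - T s (i, l)"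
    using diff_mult_ln_convex_comb_mono[OF simplex_n_nonneg[OF g] simplex_n_nonneg[OF e] t]
    by (auto intro!: sum_nonpos simp: T_def convex_comb_def)
  finally show ?thesis by (simp add: T_def)
qed

lemma entropy_minimizer_support:
  assumes g: "g \<in> simplex_n n k" and e: "e \<in> simplex_n n k"
    and slope: "\<And>t. 0 < t \<Longrightarrow> t < 1 \<Longrightarrow> 0 \<le> entropy_slope n k g e t"
    and il: "i < n" "l < k" and E: "e i l > 0"
  shows "g i l > 0"
proof (rule ccontr)
  assume "\<not> g i l > 0"
  then have g0: "g i l = 0" using simplex_n_nonneg[OF g il] by simp
  define D where "D = entropy_slope n k g e (1/2)"
  have "D \<ge> 0" using slope[of "1/2"] by (simp add: D_def)
  text \<open>The slope is nondecreasing in \<open>t\<close> and its \<open>(i, l)\<close> term is \<open>e i l * ln (t * e i l)\<close>,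
    so at this \<open>t\<close> it is at most \<open>- e i l\<close>.\<close>
  define t where "t = exp (- D / e i l - 1) / 2"
  have "D / e i l \<ge> 0" using \<open>D \<ge> 0\<close> E by simp
  then have t: "0 < t" "t \<le> 1/2" by (auto simp: t_def)
  have "ln (t * e i l) = ln (e i l / 2) + (- D / e i l - 1)"
    using E by (simp add: t_def ln_mult ln_div)
  then have "e i l * ln (t * e i l) = e i l * ln (e i l / 2) - D - e i l"
    using E by (simp add: field_simps)
  moreover have "entropy_slope n k g e t - D \<le> e i l * ln (t * e i l) - e i l * ln (e i l / 2)"
    using entropy_slope_diff_le_term[OF g e t(1,2) _ il]
    by (simp add: D_def convex_comb_def g0 mult.commute)
  ultimately have "entropy_slope n k g e t \<le> - e i l"
    by linarith
  then show False using slope[OF t(1)] t E by simp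
qed

lemma entropy_minimizer_variational_ineq:
  assumes g: "g \<in> simplex_n n k" and e: "e \<in> simplex_n n k"
    and slope: "\<And>t. 0 < t \<Longrightarrow> t < 1 \<Longrightarrow> 0 \<le> entropy_slope n k g e t"
  shows "0 \<le> (\<Sum>i<n. \<Sum>l<k. (e i l - g i l) * ln (g i l))"
proof -
  have "(entropy_slope n k g e \<longlongrightarrow> (\<Sum>i<n. \<Sum>l<k. (e i l - g i l) * ln (g i l))) (at_right 0)"
    unfolding entropy_slope_def
  proof (intro tendsto_sum)
    fix i l assume il: "i \<in> {..<n}" "l \<in> {..<k}"
    show "((\<lambda>t. (e i l - g i l) * ln (convex_comb g e t i l)) \<longlongrightarrow> (e i l - g i l) * ln (g i l))
            (at_right 0)"
    proof (cases "g i l = 0")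
      case True
      then have "e i l = 0"
        using entropy_minimizer_support[OF g e slope] simplex_n_nonneg[OF e] il by force
      then show ?thesis using True by simp
    next
      case False
      have "((\<lambda>t. convex_comb g e t i l) \<longlongrightarrow> g i l + 0 * (e i l - g i l)) (at_right 0)"
        unfolding convex_comb_def by (intro tendsto_intros)
      then show ?thesis using False by (intro tendsto_mult_left tendsto_ln) auto
    qed
  qed
  moreover have "eventually (\<lambda>t. 0 \<le> entropy_slope n k g e t) (at_right 0)"
    using eventually_at_right_real[of 0 1] by (rule eventually_mono) (auto intro: slope)
  ultimately show ?thesis by (rule tendsto_lowerbound) simp
qed

lemma dKL_eq_sum:
  assumes "\<And>i l. i < n \<Longrightarrow> l < k \<Longrightarrow> 0 \<le> e i l"
    and "\<And>i l. i < n \<Longrightarrow> l < k \<Longrightarrow> e i l > 0 \<Longrightarrow> g i l > 0"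
  shows "dKL n k e g = ereal (negent n k e - (\<Sum>i<n. \<Sum>l<k. e i l * ln (g i l)))"
proof -
  have "kl_term (e i l) (g i l) = ereal (e i l * ln (e i l) - e i l * ln (g i l))"
    if "i < n" "l < k" for i l
  proof (cases "e i l = 0")
    case True
    then show ?thesis by (simp add: kl_term_def)
  next
    case False
    then have "e i l > 0" "g i l > 0" using assms that by (auto simp: order_le_less)
    then show ?thesis by (simp add: kl_term_def ln_div algebra_simps)
  qed
  then show ?thesis by (simp add: dKL_def negent_def sum_subtractf)
qed

lemma dKL_le_negent_diff_of_minimizer:
  assumes g: "g \<in> simplex_n n k" and e: "e \<in> simplex_n n k"
    and min: "\<And>t. 0 < t \<Longrightarrow> t < 1 \<Longrightarrow> negent n k g \<le> negent n k (convex_comb g e t)"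
  shows "dKL n k e g \<le> ereal (negent n k e - negent n k g)"
proof -
  have slope: "\<And>t. 0 < t \<Longrightarrow> t < 1 \<Longrightarrow> 0 \<le> entropy_slope n k g e t"
    using entropy_slope_nonneg[OF g e min] .
  have "dKL n k e g = ereal (negent n k e - (\<Sum>i<n. \<Sum>l<k. e i l * ln (g i l)))"
    using simplex_n_nonneg[OF e] entropy_minimizer_support[OF g e slope] by (rule dKL_eq_sum)
  then show ?thesis
    using entropy_minimizer_variational_ineq[OF g e slope]
    by (simp add: negent_def sum_subtractf algebra_simps)
qed

lemma Aapply_convex_comb:
  "Aapply n k p h (convex_comb g e t) r
     = Aapply n k p h g r + t * (Aapply n k p h e r - Aapply n k p h g r)"
  unfolding Aapply_def convex_comb_def
  by (simp add: algebra_simps sum.distrib sum_subtractf sum_distrib_left)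

lemma convex_comb_in_simplex_n:
  assumes g: "g \<in> simplex_n n k" and e: "e \<in> simplex_n n k" and t: "0 \<le> t" "t \<le> 1"
  shows "convex_comb g e t \<in> simplex_n n k"
  unfolding simplex_n_def
proof (intro CollectI allI impI conjI)
  fix i assume i: "i < n"
  show "0 \<le> convex_comb g e t i l" if "l < k" for l
    using convex_comb_between[of 0 "g i l" "e i l" "max (g i l) (e i l)" t]
      simplex_n_nonneg[OF g i that] simplex_n_nonneg[OF e i that] t
    by (simp add: convex_comb_def)
  show "(\<Sum>l<k. convex_comb g e t i l) = 1"
    using g e i by (simp add: simplex_n_def convex_comb_def sum.distrib sum_subtractf
        flip: sum_distrib_left)
qed

lemma convex_comb_in_Ppoly:
  assumes g: "g \<in> Ppoly n k p h b \<epsilon>" and e: "e \<in> Ppoly n k p h b \<epsilon>" and t: "0 \<le> t" "t \<le> 1"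
  shows "convex_comb g e t \<in> Ppoly n k p h b \<epsilon>"
  using assms convex_comb_in_simplex_n[OF _ _ t]
    convex_comb_between[of "b r - \<epsilon> r" "Aapply n k p h g r" "Aapply n k p h e r" "b r + \<epsilon> r" t for r]
  by (simp add: Ppoly_def Aapply_convex_comb)

lemma gtheta_pos:
  assumes "k \<ge> 1"
  shows "gtheta n k p h \<theta> i l > 0"
proof -
  have "(\<Sum>l'<k. exp (atheta n k p h \<theta> i l')) > 0"
    using assms by (intro sum_pos) (auto simp: lessThan_empty_iff)
  then show ?thesis by (simp add: gtheta_def)
qed

lemma gtheta_row_sum:
  assumes "k \<ge> 1"
  shows "(\<Sum>l<k. gtheta n k p h \<theta> i l) = 1"
proof -
  have "(\<Sum>l'<k. exp (atheta n k p h \<theta> i l')) > 0"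
    using assms by (intro sum_pos) (auto simp: lessThan_empty_iff)
  then show ?thesis by (simp add: gtheta_def flip: sum_divide_distrib)
qed

lemma cross_entropy_le_negent:
  assumes g: "g \<in> simplex_n n k"
    and q_pos: "\<And>i l. i < n \<Longrightarrow> l < k \<Longrightarrow> q i l > 0"
    and q_sum: "\<And>i. i < n \<Longrightarrow> (\<Sum>l<k. q i l) = 1"
  shows "(\<Sum>i<n. \<Sum>l<k. g i l * ln (q i l)) \<le> negent n k g"
proof -
  have "(\<Sum>i<n. \<Sum>l<k. g i l - q i l) \<le> (\<Sum>i<n. \<Sum>l<k. g i l * ln (g i l) - g i l * ln (q i l))"
    using mult_ln_ge_diff simplex_n_nonneg[OF g] q_pos by (intro sum_mono) auto
  moreover have "(\<Sum>i<n. \<Sum>l<k. g i l - q i l) = 0"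
    using g q_sum by (simp add: sum_subtractf simplex_n_def)
  ultimately show ?thesis by (simp add: negent_def sum_subtractf)
qed

lemma sum_mult_ln_gtheta:
  assumes z: "z \<in> simplex_n n k" and k: "k \<ge> 1"
  shows "(\<Sum>i<n. \<Sum>l<k. z i l * ln (gtheta n k p h \<theta> i l))
     = (\<Sum>r<p+k. \<theta> r * Aapply n k p h z r) - (\<Sum>i<n. ln (\<Sum>l'<k. exp (atheta n k p h \<theta> i l')))"
proof -
  define Z where "Z i = (\<Sum>l'<k. exp (atheta n k p h \<theta> i l'))" for i
  have Z_pos: "Z i > 0" for i
    unfolding Z_def using k by (intro sum_pos) (auto simp: lessThan_empty_iff)
  have ln_g: "ln (gtheta n k p h \<theta> i l) = atheta n k p h \<theta> i l - ln (Z i)" for i l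
    using Z_pos[of i] by (simp add: gtheta_def Z_def[symmetric] ln_div)
  have "(\<Sum>i<n. \<Sum>l<k. z i l * ln (gtheta n k p h \<theta> i l))
      = (\<Sum>i<n. \<Sum>l<k. z i l * atheta n k p h \<theta> i l) - (\<Sum>i<n. ln (Z i) * (\<Sum>l<k. z i l))"
    by (simp add: ln_g algebra_simps sum_subtractf sum_distrib_left sum_distrib_right)
  also have "(\<Sum>i<n. ln (Z i) * (\<Sum>l<k. z i l)) = (\<Sum>i<n. ln (Z i))"
    using z by (simp add: simplex_n_def)
  also have "(\<Sum>i<n. \<Sum>l<k. z i l * atheta n k p h \<theta> i l)
      = (\<Sum>i<n. \<Sum>l<k. \<Sum>r<p+k. \<theta> r * (Amat n k p h r i l * z i l))"
    unfolding atheta_def by (simp add: sum_distrib_left mult_ac)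
  also have "\<dots> = (\<Sum>i<n. \<Sum>r<p+k. \<Sum>l<k. \<theta> r * (Amat n k p h r i l * z i l))"
    by (rule sum.cong[OF refl], rule sum.swap)
  also have "\<dots> = (\<Sum>r<p+k. \<Sum>i<n. \<Sum>l<k. \<theta> r * (Amat n k p h r i l * z i l))"
    by (rule sum.swap)
  also have "\<dots> = (\<Sum>r<p+k. \<theta> r * Aapply n k p h z r)"
    by (simp add: Aapply_def sum_distrib_left)
  finally show ?thesis by (simp add: Z_def)
qed

lemma negent_diff_le_dKL_gtheta:
  assumes \<eta>: "\<eta> \<in> simplex_n n k" and g: "g \<in> simplex_n n k" and k: "k \<ge> 1"
    and close: "\<And>r. r < p + k \<Longrightarrow> \<bar>Aapply n k p h \<eta> r - Aapply n k p h g r\<bar> \<le> 2 * \<epsilon> r"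
  shows "ereal (negent n k \<eta> - negent n k g)
           \<le> dKL n k \<eta> (gtheta n k p h \<theta>) + ereal (2 * (\<Sum>r<p+k. \<epsilon> r * \<bar>\<theta> r\<bar>))"
proof -
  let ?q = "gtheta n k p h \<theta>"
  have "(\<Sum>i<n. \<Sum>l<k. \<eta> i l * ln (?q i l)) - (\<Sum>i<n. \<Sum>l<k. g i l * ln (?q i l))
      = (\<Sum>r<p+k. \<theta> r * Aapply n k p h \<eta> r) - (\<Sum>r<p+k. \<theta> r * Aapply n k p h g r)"
    unfolding sum_mult_ln_gtheta[OF \<eta> k] sum_mult_ln_gtheta[OF g k] by simp
  also have "\<dots> = (\<Sum>r<p+k. \<theta> r * (Aapply n k p h \<eta> r - Aapply n k p h g r))"
    by (simp add: right_diff_distrib sum_subtractf)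
  also have "\<dots> \<le> (\<Sum>r<p+k. 2 * (\<epsilon> r * \<bar>\<theta> r\<bar>))"
  proof (rule sum_mono)
    fix r assume r: "r \<in> {..<p+k}"
    have "\<theta> r * (Aapply n k p h \<eta> r - Aapply n k p h g r)
        \<le> \<bar>\<theta> r\<bar> * \<bar>Aapply n k p h \<eta> r - Aapply n k p h g r\<bar>"
      by (metis abs_ge_self abs_mult)
    also have "\<dots> \<le> \<bar>\<theta> r\<bar> * (2 * \<epsilon> r)"
      using close r by (simp add: mult_left_mono)
    finally show "\<theta> r * (Aapply n k p h \<eta> r - Aapply n k p h g r) \<le> 2 * (\<epsilon> r * \<bar>\<theta> r\<bar>)"
      by (simp add: mult_ac)
  qed
  finally have "(\<Sum>i<n. \<Sum>l<k. \<eta> i l * ln (?q i l)) - (\<Sum>i<n. \<Sum>l<k. g i l * ln (?q i l))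
      \<le> (\<Sum>r<p+k. 2 * (\<epsilon> r * \<bar>\<theta> r\<bar>))" .
  moreover have "(\<Sum>i<n. \<Sum>l<k. g i l * ln (?q i l)) \<le> negent n k g"
    by (rule cross_entropy_le_negent[OF g]) (simp_all add: gtheta_pos[OF k] gtheta_row_sum[OF k])
  ultimately have "(\<Sum>i<n. \<Sum>l<k. \<eta> i l * ln (?q i l)) - negent n k g
      \<le> 2 * (\<Sum>r<p+k. \<epsilon> r * \<bar>\<theta> r\<bar>)"
    by (simp add: sum_distrib_left)
  moreover have "dKL n k \<eta> ?q = ereal (negent n k \<eta> - (\<Sum>i<n. \<Sum>l<k. \<eta> i l * ln (?q i l)))"
    using simplex_n_nonneg[OF \<eta>] gtheta_pos[OF k] by (rule dKL_eq_sum)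
  ultimately show ?thesis by simp
qed

lemma sum_mult_abs_le_Max_abs:
  fixes f g :: "'a \<Rightarrow> real"
  assumes "finite A"
  shows "(\<Sum>r\<in>A. f r * \<bar>g r\<bar>) \<le> Max ((\<lambda>r. \<bar>f r\<bar>) ` A) * (\<Sum>r\<in>A. \<bar>g r\<bar>)"
  unfolding sum_distrib_left
  using assms by (intro sum_mono mult_right_mono order_trans[OF abs_ge_self Max_ge]) auto

theorem mainTheorem8:
  fixes n k p :: nat
    and h :: "nat \<Rightarrow> nat \<Rightarrow> nat option"
    and \<eta> gbf :: "nat \<Rightarrow> nat \<Rightarrow> real"
    and b \<epsilon> \<theta>ref :: "nat \<Rightarrow> real"
  assumes hn: "n \<ge> 1" and hk: "k \<ge> 2" and hp: "p \<ge> 1"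
    and hrange: "\<And>j i l. j < p \<Longrightarrow> i < n \<Longrightarrow> h j i = Some l \<Longrightarrow> l < k"
    and hnj: "\<And>j. j < p \<Longrightarrow> n_rule n h j \<ge> 1"
    and heta: "\<eta> \<in> simplex_n n k"
    and heps: "\<And>r. r < p + k \<Longrightarrow> \<epsilon> r \<ge> 0"
    and hb: "\<And>r. r < p + k \<Longrightarrow>
               b r - \<epsilon> r \<le> Aapply n k p h \<eta> r \<and> Aapply n k p h \<eta> r \<le> b r + \<epsilon> r"
    and hgbf: "is_maxent n k (Ppoly n k p h b \<epsilon>) gbf"
  shows "let V = (INF z\<in>Ppoly n k p h b \<epsilon>. negent n k z);
             gref = gtheta n k p h \<theta>ref
         in dKL n k \<eta> gbf \<le> ereal (- V + negent n k \<eta>)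
          \<and> ereal (- V + negent n k \<eta>)
              \<le> dKL n k \<eta> gref + ereal (2 * (\<Sum>r<p+k. \<epsilon> r * \<bar>\<theta>ref r\<bar>))
          \<and> dKL n k \<eta> gref + ereal (2 * (\<Sum>r<p+k. \<epsilon> r * \<bar>\<theta>ref r\<bar>))
              \<le> dKL n k \<eta> gref
                 + ereal (2 * Max ((\<lambda>r. \<bar>\<epsilon> r\<bar>) ` {..<p+k}) * (\<Sum>r<p+k. \<bar>\<theta>ref r\<bar>))"
proof -
  define P where "P = Ppoly n k p h b \<epsilon>"
  have \<eta>P: "\<eta> \<in> P" using heta hb by (simp add: P_def Ppoly_def)
  have gP: "gbf \<in> P" and gmin: "\<And>z. z \<in> P \<Longrightarrow> negent n k gbf \<le> negent n k z"
    using hgbf by (auto simp: is_maxent_def P_def)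
  have g: "gbf \<in> simplex_n n k" using gP by (simp add: P_def Ppoly_def)
  have V: "(INF z\<in>P. negent n k z) = negent n k gbf"
    using gP gmin by (intro cInf_eq_minimum) auto
  have part1: "dKL n k \<eta> gbf \<le> ereal (negent n k \<eta> - negent n k gbf)"
    using g heta gmin convex_comb_in_Ppoly[OF gP[unfolded P_def] \<eta>P[unfolded P_def]]
    by (intro dKL_le_negent_diff_of_minimizer) (auto simp: P_def)
  have "\<bar>Aapply n k p h \<eta> r - Aapply n k p h gbf r\<bar> \<le> 2 * \<epsilon> r" if "r < p + k" for r
    using hb[OF that] gP that by (auto simp: P_def Ppoly_def)
  then have part2: "ereal (negent n k \<eta> - negent n k gbf)
      \<le> dKL n k \<eta> (gtheta n k p h \<theta>ref) + ereal (2 * (\<Sum>r<p+k. \<epsilon> r * \<bar>\<theta>ref r\<bar>))"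
    using hk by (intro negent_diff_le_dKL_gtheta[OF heta g]) auto
  have part3: "2 * (\<Sum>r<p+k. \<epsilon> r * \<bar>\<theta>ref r\<bar>)
      \<le> 2 * Max ((\<lambda>r. \<bar>\<epsilon> r\<bar>) ` {..<p+k}) * (\<Sum>r<p+k. \<bar>\<theta>ref r\<bar>)"
    using sum_mult_abs_le_Max_abs[of "{..<p+k}" \<epsilon> \<theta>ref] by simp
  show ?thesis
    unfolding Let_def P_def[symmetric] V
    using part1 part2 part3 dKL_eq_sum[OF simplex_n_nonneg[OF heta] gtheta_pos] hk
    by (simp add: add.commute)
qed

end
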